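(* Let $x\neq0$ be represented by a tensor network on graph $G$ with $n$ vertices, and let $0\le\varepsilon_i\le\varepsilon$. Define $x^{(0)}=x$ and, for $i=1,\dots,n$: take a tensor network $(G,\mathbf C^{(1)},\dots,\mathbf C^{(n)})$ representing $x^{(i-1)}$ which is in canonical form centered at $v_i$, replace $\mathbf C^{(i)}$ by $\mathbf C^{(i)}+\delta^{(i)}$ with $\|\delta^{(i)}\|_F\le\varepsilon_i\|\mathbf C^{(i)}\|_F$, and let $x^{(i)}$ be the vectorized contraction of the resulting network. Then $\hat x=x^{(n)}$ satisfies $$\frac{\|\hat x-x\|_2}{\|x\|_2}\le n\varepsilon+O(\varepsilon^2)\quad(\varepsilon\to0).$$
   Context: Tensor network setup: A tensor network $(G,\mathbf T^{(1)},\dots,\mathbf T^{(n)})$ consists of a multigraph $G$ with vertices $v_1,\dots,v_n$, whose edges are either edges between distinct vertices (contracted legs) or self-loops (uncontracted legs), each edge having a dimension, and tensors $\mathbf T^{(j)}$ at $v_j$ with one mode per incident edge. Its contraction $\mathscr T_G(\mathbf T^{(1)},\dots,\mathbf T^{(n)})$ is obtained by summing over all contracted-edge indices the product of the entries of all $\mathbf T^{(j)}$. The environment matrix $M_{\mathbf T^{(j)}}$ of site $j$ is the matrix of the linear map $X\mapsto\mathrm{vec}(\mathscr T_G(\mathbf T^{(1)},\dots,X,\dots,\mathbf T^{(n)}))$ ($X$ in slot $j$) acting on $\mathrm{vec}(X)$. The network is in canonical form centered at $v_j$ if $M_{\mathbf T^{(j)}}$ is an isometry ($M^*M=I$). It is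 assumed that at every step such a canonical representation exists. *)

theory Defs
  imports "HOL-Analysis.Analysis"
begin

text \<open>A tensor network graph: vertices 0..<nv, edges 0..<ne, each edge e has endpoints
  ends e (a self-loop, i.e. both endpoints equal, is an uncontracted leg) and a dimension dim e.\<close>
record tn_graph =
  nv :: nat
  ne :: nat
  ends :: "nat \<Rightarrow> nat \<times> nat"
  dim :: "nat \<Rightarrow> nat"

definition wf_graph :: "tn_graph \<Rightarrow> bool" where
  "wf_graph G \<longleftrightarrow> (\<forall>e<ne G. fst (ends G e) < nv G \<and> snd (ends G e) < nv G \<and> 0 < dim G e)"

definition inc :: "tn_graph \<Rightarrow> nat \<Rightarrow> nat set" where
  "inc G j = {e. e < ne G \<and> (fst (ends G e) = j \<or> snd (ends G e) = j)}"

definition open_edges :: "tn_graph \<Rightarrow> nat set" where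
  "open_edges G = {e. e < ne G \<and> fst (ends G e) = snd (ends G e)}"

definition contr_edges :: "tn_graph \<Rightarrow> nat set" where
  "contr_edges G = {e. e < ne G \<and> fst (ends G e) \<noteq> snd (ends G e)}"

text \<open>Index assignments to a set S of edges (multi-indices); zero outside S.\<close>
definition assignments :: "tn_graph \<Rightarrow> nat set \<Rightarrow> (nat \<Rightarrow> nat) set" where
  "assignments G S = {\<iota>. (\<forall>e\<in>S. \<iota> e < dim G e) \<and> (\<forall>e. e \<notin> S \<longrightarrow> \<iota> e = 0)}"

definition restr :: "nat set \<Rightarrow> (nat \<Rightarrow> nat) \<Rightarrow> (nat \<Rightarrow> nat)" where
  "restr S \<iota> = (\<lambda>e. if e \<in> S then \<iota> e else 0)"

text \<open>A tensor at a vertex j is a function of multi-indices in assignments G (inc G j);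
  a network assigns a tensor to every vertex.\<close>
type_synonym tensor = "(nat \<Rightarrow> nat) \<Rightarrow> complex"
type_synonym network = "nat \<Rightarrow> tensor"

definition contract :: "tn_graph \<Rightarrow> network \<Rightarrow> tensor" where
  "contract G T \<omega> =
     (\<Sum>\<kappa>\<in>assignments G (contr_edges G).
        \<Prod>j<nv G. T j (restr (inc G j) (\<lambda>e. if e \<in> open_edges G then \<omega> e else \<kappa> e)))"

text \<open>Euclidean norm of the vectorized contraction (independent of the ordering of entries).\<close>
definition vnorm :: "tn_graph \<Rightarrow> tensor \<Rightarrow> real" where
  "vnorm G y = sqrt (\<Sum>\<omega>\<in>assignments G (open_edges G). (cmod (y \<omega>))\<^sup>2)"

definition frob :: "tn_graph \<Rightarrow> nat \<Rightarrow> tensor \<Rightarrow> real" where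
  "frob G j X = sqrt (\<Sum>a\<in>assignments G (inc G j). (cmod (X a))\<^sup>2)"

text \<open>Environment matrix of site j: row index = open multi-index, column index = multi-index
  of the tensor at j; column a is the image of the standard basis tensor a.\<close>
definition env :: "tn_graph \<Rightarrow> network \<Rightarrow> nat \<Rightarrow> (nat \<Rightarrow> nat) \<Rightarrow> (nat \<Rightarrow> nat) \<Rightarrow> complex" where
  "env G T j \<omega> a = contract G (T(j := (\<lambda>b. if b = a then 1 else 0))) \<omega>"

text \<open>Canonical form centered at vertex j: the environment matrix is an isometry, M^* M = I.\<close>
definition canonical_at :: "tn_graph \<Rightarrow> network \<Rightarrow> nat \<Rightarrow> bool" where
  "canonical_at G T j \<longleftrightarrow>
     (\<forall>a\<in>assignments G (inc G j). \<forall>b\<in>assignments G (inc G j).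
        (\<Sum>\<omega>\<in>assignments G (open_edges G). cnj (env G T j \<omega> a) * env G T j \<omega> b)
          = (if a = b then 1 else 0))"

end

theory Submission
  imports Defs
begin

text \<open>The contraction is linear in the tensor at each site, with the environment matrix as
  coefficient matrix. In canonical form centred at \<open>v\<^sub>i\<close> this matrix is an isometry, so the
  \<open>i\<close>-th perturbation moves the vector by exactly \<open>\<parallel>\<delta>\<^sub>i\<parallel>\<^sub>F \<le> \<epsilon>\<^sub>i \<parallel>C\<^sub>i\<parallel>\<^sub>F = \<epsilon>\<^sub>i \<parallel>x\<^sub>i\<^sub>-\<^sub>1\<parallel>\<close>.
  Telescoping with the triangle inequality gives \<open>\<parallel>x\<^sub>n - x\<parallel> \<le> ((1 + \<epsilon>)\<^sup>n - 1) \<parallel>x\<parallel>\<close>,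
  and \<open>(1 + \<epsilon>)\<^sup>n - 1 = n\<epsilon> + O(\<epsilon>\<^sup>2)\<close>.\<close>

lemma finite_assignments:
  assumes "finite S"
  shows "finite (assignments G S)"
proof -
  have "inj_on (\<lambda>\<iota>. restrict \<iota> S) (assignments G S)"
  proof (rule inj_onI, rule ext)
    fix \<iota> \<iota>' e assume "\<iota> \<in> assignments G S" "\<iota>' \<in> assignments G S"
      and "restrict \<iota> S = restrict \<iota>' S"
    then show "\<iota> e = \<iota>' e"
      by (cases "e \<in> S") (auto simp: assignments_def dest: fun_cong[of _ _ e])
  qed
  moreover have "(\<lambda>\<iota>. restrict \<iota> S) ` assignments G S \<subseteq> PiE S (\<lambda>e. {..<dim G e})"
    by (auto simp: assignments_def restrict_def)
  moreover have "finite (PiE S (\<lambda>e. {..<dim G e}))"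
    using assms by (simp add: finite_PiE)
  ultimately show ?thesis
    by (metis finite_imageD finite_subset)
qed

lemma finite_assignments_open_edges: "finite (assignments G (open_edges G))"
  by (rule finite_assignments) (auto simp: open_edges_def)

lemma finite_assignments_inc: "finite (assignments G (inc G j))"
  by (rule finite_assignments) (auto simp: inc_def)

lemma vnorm_eq_L2_set: "vnorm G y = L2_set (\<lambda>\<omega>. cmod (y \<omega>)) (assignments G (open_edges G))"
  by (simp add: vnorm_def L2_set_def)

lemma vnorm_nonneg: "0 \<le> vnorm G y"
  by (simp add: vnorm_def sum_nonneg)

lemma vnorm_pos:
  assumes "\<exists>\<omega>\<in>assignments G (open_edges G). y \<omega> \<noteq> 0"
  shows "0 < vnorm G y"
proof -
  obtain \<omega> where \<omega>: "\<omega> \<in> assignments G (open_edges G)" "y \<omega> \<noteq> 0"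
    using assms by blast
  have "0 < (cmod (y \<omega>))\<^sup>2"
    using \<omega> by simp
  also have "\<dots> \<le> (\<Sum>\<omega>\<in>assignments G (open_edges G). (cmod (y \<omega>))\<^sup>2)"
    using \<omega> finite_assignments_open_edges by (intro member_le_sum) auto
  finally show ?thesis
    by (simp add: vnorm_def)
qed

lemma vnorm_cong:
  "(\<And>\<omega>. \<omega> \<in> assignments G (open_edges G) \<Longrightarrow> y \<omega> = z \<omega>) \<Longrightarrow> vnorm G y = vnorm G z"
  unfolding vnorm_def by (simp cong: sum.cong)

lemma vnorm_triangle: "vnorm G (\<lambda>\<omega>. y \<omega> + z \<omega>) \<le> vnorm G y + vnorm G z"
proof -
  have "vnorm G (\<lambda>\<omega>. y \<omega> + z \<omega>)
      \<le> L2_set (\<lambda>\<omega>. cmod (y \<omega>) + cmod (z \<omega>)) (assignments G (open_edges G))"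
    unfolding vnorm_eq_L2_set by (rule L2_set_mono) (auto simp: norm_triangle_ineq)
  also have "\<dots> \<le> vnorm G y + vnorm G z"
    unfolding vnorm_eq_L2_set by (rule L2_set_triangle_ineq)
  finally show ?thesis .
qed

lemma vnorm_diff_triangle:
  "vnorm G (\<lambda>\<omega>. x \<omega> - z \<omega>) \<le> vnorm G (\<lambda>\<omega>. x \<omega> - y \<omega>) + vnorm G (\<lambda>\<omega>. y \<omega> - z \<omega>)"
  using vnorm_triangle[of G "\<lambda>\<omega>. x \<omega> - y \<omega>" "\<lambda>\<omega>. y \<omega> - z \<omega>"] by simp

lemma vnorm_le_diff_add: "vnorm G x \<le> vnorm G (\<lambda>\<omega>. x \<omega> - y \<omega>) + vnorm G y"
  using vnorm_triangle[of G "\<lambda>\<omega>. x \<omega> - y \<omega>" y] by simp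

lemma vnorm_diff_telescope:
  fixes xs :: "nat \<Rightarrow> tensor"
  assumes "0 \<le> \<epsilon>"
    and steps: "\<And>i. i < n \<Longrightarrow> vnorm G (\<lambda>\<omega>. xs (Suc i) \<omega> - xs i \<omega>) \<le> \<epsilon> * vnorm G (xs i)"
  shows "vnorm G (\<lambda>\<omega>. xs n \<omega> - xs 0 \<omega>) \<le> ((1 + \<epsilon>) ^ n - 1) * vnorm G (xs 0)"
  using steps
proof (induction n)
  case 0
  then show ?case
    by (simp add: vnorm_def)
next
  case (Suc n)
  let ?N = "vnorm G (xs 0)" and ?D = "vnorm G (\<lambda>\<omega>. xs n \<omega> - xs 0 \<omega>)"
  have IH: "?D \<le> ((1 + \<epsilon>) ^ n - 1) * ?N"
    using Suc by simp
  have "vnorm G (\<lambda>\<omega>. xs (Suc n) \<omega> - xs 0 \<omega>) \<le> vnorm G (\<lambda>\<omega>. xs (Suc n) \<omega> - xs n \<omega>) + ?D"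
    by (rule vnorm_diff_triangle)
  also have "\<dots> \<le> \<epsilon> * vnorm G (xs n) + ?D"
    using Suc.prems by simp
  also have "\<dots> \<le> \<epsilon> * (?D + ?N) + ?D"
    using vnorm_le_diff_add[of G "xs n" "xs 0"] \<open>0 \<le> \<epsilon>\<close> by (simp add: mult_left_mono)
  also have "\<dots> \<le> \<epsilon> * (((1 + \<epsilon>) ^ n - 1) * ?N + ?N) + ((1 + \<epsilon>) ^ n - 1) * ?N"
    using IH \<open>0 \<le> \<epsilon>\<close> by (intro add_mono mult_left_mono) auto
  also have "\<dots> = ((1 + \<epsilon>) ^ Suc n - 1) * ?N"
    by (simp add: algebra_simps)
  finally show ?case .
qed

lemma sum_norm_square_orthonormal_columns:
  fixes M :: "'a \<Rightarrow> 'b \<Rightarrow> complex"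
  assumes "finite A" "finite B"
    and orth: "\<And>a b. a \<in> B \<Longrightarrow> b \<in> B \<Longrightarrow>
      (\<Sum>\<omega>\<in>A. cnj (M \<omega> a) * M \<omega> b) = (if a = b then 1 else 0)"
  shows "(\<Sum>\<omega>\<in>A. (cmod (\<Sum>a\<in>B. M \<omega> a * f a))\<^sup>2) = (\<Sum>a\<in>B. (cmod (f a))\<^sup>2)"
proof -
  have "complex_of_real (\<Sum>\<omega>\<in>A. (cmod (\<Sum>a\<in>B. M \<omega> a * f a))\<^sup>2)
      = (\<Sum>\<omega>\<in>A. \<Sum>a\<in>B. \<Sum>b\<in>B. cnj (f a) * f b * (cnj (M \<omega> a) * M \<omega> b))"
    unfolding of_real_sum complex_norm_square
    by (simp add: sum_distrib_left sum_distrib_right mult_ac)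
  also have "\<dots> = (\<Sum>a\<in>B. \<Sum>b\<in>B. cnj (f a) * f b * (\<Sum>\<omega>\<in>A. cnj (M \<omega> a) * M \<omega> b))"
    by (subst sum.swap) (simp add: sum.swap[of _ A] sum_distrib_left)
  also have "\<dots> = (\<Sum>a\<in>B. cnj (f a) * f a)"
    using \<open>finite B\<close> by (simp add: orth if_distrib cong: if_cong)
  also have "\<dots> = complex_of_real (\<Sum>a\<in>B. (cmod (f a))\<^sup>2)"
    unfolding of_real_sum complex_norm_square by (simp add: mult.commute)
  finally show ?thesis
    using of_real_eq_iff by blast
qed

definition site_index :: "tn_graph \<Rightarrow> (nat \<Rightarrow> nat) \<Rightarrow> (nat \<Rightarrow> nat) \<Rightarrow> nat \<Rightarrow> nat \<Rightarrow> nat" where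
  "site_index G \<omega> \<kappa> j = restr (inc G j) (\<lambda>e. if e \<in> open_edges G then \<omega> e else \<kappa> e)"

lemma contract_eq_sum_site_index:
  "contract G T \<omega> = (\<Sum>\<kappa>\<in>assignments G (contr_edges G). \<Prod>k<nv G. T k (site_index G \<omega> \<kappa> k))"
  by (simp add: contract_def site_index_def)

lemma site_index_in_assignments:
  assumes "\<omega> \<in> assignments G (open_edges G)" "\<kappa> \<in> assignments G (contr_edges G)"
  shows "site_index G \<omega> \<kappa> j \<in> assignments G (inc G j)"
  using assms
  by (auto simp: site_index_def assignments_def restr_def inc_def open_edges_def contr_edges_def)

lemma contract_fun_upd:
  assumes "j < nv G"
  shows "contract G (T(j := X)) \<omega> = (\<Sum>\<kappa>\<in>assignments G (contr_edges G).
    X (site_index G \<omega> \<kappa> j) * (\<Prod>k\<in>{..<nv G} - {j}. T k (site_index G \<omega> \<kappa> k)))"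
proof -
  have "(\<Prod>k<nv G. (T(j := X)) k (site_index G \<omega> \<kappa> k))
      = X (site_index G \<omega> \<kappa> j) * (\<Prod>k\<in>{..<nv G} - {j}. T k (site_index G \<omega> \<kappa> k))" for \<kappa>
    using assms by (subst prod.remove[of _ j]) (auto intro!: prod.cong)
  then show ?thesis
    by (simp add: contract_eq_sum_site_index)
qed

lemma contract_fun_upd_eq_env:
  assumes j: "j < nv G" and \<omega>: "\<omega> \<in> assignments G (open_edges G)"
  shows "contract G (T(j := X)) \<omega> = (\<Sum>a\<in>assignments G (inc G j). env G T j \<omega> a * X a)"
proof -
  let ?B = "assignments G (inc G j)" and ?K = "assignments G (contr_edges G)"
  define P where "P \<kappa> = (\<Prod>k\<in>{..<nv G} - {j}. T k (site_index G \<omega> \<kappa> k))" for \<kappa>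
  have "(\<Sum>a\<in>?B. env G T j \<omega> a * X a)
      = (\<Sum>a\<in>?B. \<Sum>\<kappa>\<in>?K. (if site_index G \<omega> \<kappa> j = a then X a * P \<kappa> else 0))"
    unfolding env_def contract_fun_upd[OF j] P_def
    by (intro sum.cong refl) (auto simp: sum_distrib_right intro!: sum.cong)
  also have "\<dots> = (\<Sum>\<kappa>\<in>?K. \<Sum>a\<in>?B. (if site_index G \<omega> \<kappa> j = a then X a * P \<kappa> else 0))"
    by (rule sum.swap)
  also have "\<dots> = (\<Sum>\<kappa>\<in>?K. X (site_index G \<omega> \<kappa> j) * P \<kappa>)"
    using site_index_in_assignments[OF \<omega>] finite_assignments_inc
    by (intro sum.cong refl) simp
  also have "\<dots> = contract G (T(j := X)) \<omega>"
    unfolding contract_fun_upd[OF j] P_def ..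
  finally show ?thesis ..
qed

lemma contract_eq_env:
  assumes "j < nv G" "\<omega> \<in> assignments G (open_edges G)"
  shows "contract G T \<omega> = (\<Sum>a\<in>assignments G (inc G j). env G T j \<omega> a * T j a)"
  using contract_fun_upd_eq_env[OF assms, of T "T j"] by simp

lemma vnorm_env_eq_frob:
  assumes "canonical_at G C j"
  shows "vnorm G (\<lambda>\<omega>. \<Sum>a\<in>assignments G (inc G j). env G C j \<omega> a * f a) = frob G j f"
  using assms
  unfolding vnorm_def frob_def canonical_at_def
  by (simp add: sum_norm_square_orthonormal_columns[OF finite_assignments_open_edges finite_assignments_inc])

lemma vnorm_contract_eq_frob:
  assumes "j < nv G" "canonical_at G C j"
  shows "vnorm G (contract G C) = frob G j (C j)"
proof -
  have "vnorm G (contract G C) = vnorm G (\<lambda>\<omega>. \<Sum>a\<in>assignments G (inc G j). env G C j \<omega> a * C j a)"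
    by (rule vnorm_cong) (rule contract_eq_env[OF assms(1)])
  also have "\<dots> = frob G j (C j)"
    by (rule vnorm_env_eq_frob[OF assms(2)])
  finally show ?thesis .
qed

lemma vnorm_perturb_canonical_site:
  assumes j: "j < nv G" and can: "canonical_at G C j"
    and small: "frob G j d \<le> e * frob G j (C j)"
  shows "vnorm G (\<lambda>\<omega>. contract G (C(j := \<lambda>a. C j a + d a)) \<omega> - contract G C \<omega>)
    \<le> e * vnorm G (contract G C)"
proof -
  let ?B = "assignments G (inc G j)"
  have "vnorm G (\<lambda>\<omega>. contract G (C(j := \<lambda>a. C j a + d a)) \<omega> - contract G C \<omega>)
      = vnorm G (\<lambda>\<omega>. \<Sum>a\<in>?B. env G C j \<omega> a * d a)"
    by (rule vnorm_cong)
      (simp add: contract_fun_upd_eq_env[OF j, of _ C] contract_eq_env[OF j, of _ C]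
        ring_distribs sum.distrib)
  also have "\<dots> = frob G j d"
    by (rule vnorm_env_eq_frob[OF can])
  finally show ?thesis
    using small vnorm_contract_eq_frob[OF j can] by simp
qed

lemma vnorm_sweep_error_le:
  fixes xs :: "nat \<Rightarrow> tensor" and Cs :: "nat \<Rightarrow> network"
  assumes "0 \<le> \<epsilon>" "\<And>i. i < nv G \<Longrightarrow> eps i \<le> \<epsilon>"
    and represents: "\<And>i \<omega>. i < nv G \<Longrightarrow> \<omega> \<in> assignments G (open_edges G) \<Longrightarrow>
      contract G (Cs i) \<omega> = xs i \<omega>"
    and canonical: "\<And>i. i < nv G \<Longrightarrow> canonical_at G (Cs i) i"
    and small: "\<And>i. i < nv G \<Longrightarrow> frob G i (ds i) \<le> eps i * frob G i (Cs i i)"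
    and update: "\<And>i \<omega>. i < nv G \<Longrightarrow> \<omega> \<in> assignments G (open_edges G) \<Longrightarrow>
      xs (Suc i) \<omega> = contract G ((Cs i)(i := (\<lambda>a. Cs i i a + ds i a))) \<omega>"
  shows "vnorm G (\<lambda>\<omega>. xs (nv G) \<omega> - xs 0 \<omega>) \<le> ((1 + \<epsilon>) ^ nv G - 1) * vnorm G (xs 0)"
proof (rule vnorm_diff_telescope[OF \<open>0 \<le> \<epsilon>\<close>])
  fix i
  assume i: "i < nv G"
  have "vnorm G (\<lambda>\<omega>. xs (Suc i) \<omega> - xs i \<omega>)
      = vnorm G (\<lambda>\<omega>. contract G ((Cs i)(i := (\<lambda>a. Cs i i a + ds i a))) \<omega> - contract G (Cs i) \<omega>)"
    using represents update i by (intro vnorm_cong) auto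
  also have "\<dots> \<le> eps i * vnorm G (contract G (Cs i))"
    by (rule vnorm_perturb_canonical_site[OF i canonical[OF i] small[OF i]])
  also have "vnorm G (contract G (Cs i)) = vnorm G (xs i)"
    using represents[OF i] by (rule vnorm_cong)
  also have "eps i * vnorm G (xs i) \<le> \<epsilon> * vnorm G (xs i)"
    using assms(2)[OF i] by (rule mult_right_mono) (rule vnorm_nonneg)
  finally show "vnorm G (\<lambda>\<omega>. xs (Suc i) \<omega> - xs i \<omega>) \<le> \<epsilon> * vnorm G (xs i)" .
qed

lemma one_add_power_le:
  fixes e :: real
  assumes "0 \<le> e" "e \<le> 1"
  shows "(1 + e) ^ n \<le> 1 + real n * e + 3 ^ n * e\<^sup>2"
proof (induction n)
  case 0
  then show ?case by simp
next
  case (Suc n)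
  have "real n \<le> 2 ^ n"
    using less_exp[of n] by (metis less_imp_le of_nat_le_iff of_nat_numeral of_nat_power)
  also have "\<dots> \<le> 3 ^ n"
    by (simp add: power_mono)
  finally have "real n \<le> 3 ^ n" .
  moreover have "3 ^ n * e \<le> 3 ^ n"
    using assms by simp
  ultimately have "real n + 3 ^ n + 3 ^ n * e \<le> 3 ^ Suc n"
    using power_Suc[of "3::real" n] by linarith
  then have "e\<^sup>2 * (real n + 3 ^ n + 3 ^ n * e) \<le> e\<^sup>2 * 3 ^ Suc n"
    by (simp add: mult_left_mono)
  moreover have "(1 + e) ^ Suc n \<le> (1 + e) * (1 + real n * e + 3 ^ n * e\<^sup>2)"
    using Suc assms by (simp add: mult_left_mono)
  moreover have "(1 + e) * (1 + real n * e + 3 ^ n * e\<^sup>2)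
      = 1 + real (Suc n) * e + e\<^sup>2 * (real n + 3 ^ n + 3 ^ n * e)"
    by (simp add: algebra_simps power2_eq_square)
  ultimately show ?case
    by (simp add: mult.commute)
qed

theorem mainTheorem8:
  fixes G :: tn_graph and T0 :: network
  assumes "wf_graph G"
    and "\<exists>\<omega>\<in>assignments G (open_edges G). contract G T0 \<omega> \<noteq> 0"
  shows "\<exists>K \<epsilon>0. 0 < \<epsilon>0 \<and>
    (\<forall>\<epsilon> :: real. 0 < \<epsilon> \<and> \<epsilon> < \<epsilon>0 \<longrightarrow>
      (\<forall>(eps :: nat \<Rightarrow> real) (xs :: nat \<Rightarrow> tensor) (Cs :: nat \<Rightarrow> network) (ds :: nat \<Rightarrow> tensor).
        (\<forall>i<nv G. 0 \<le> eps i \<and> eps i \<le> \<epsilon>)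
        \<and> (\<forall>\<omega>\<in>assignments G (open_edges G). xs 0 \<omega> = contract G T0 \<omega>)
        \<and> (\<forall>i<nv G. \<forall>\<omega>\<in>assignments G (open_edges G). contract G (Cs i) \<omega> = xs i \<omega>)
        \<and> (\<forall>i<nv G. canonical_at G (Cs i) i)
        \<and> (\<forall>i<nv G. frob G i (ds i) \<le> eps i * frob G i (Cs i i))
        \<and> (\<forall>i<nv G. \<forall>\<omega>\<in>assignments G (open_edges G).
             xs (Suc i) \<omega> = contract G ((Cs i)(i := (\<lambda>a. Cs i i a + ds i a))) \<omega>)
        \<longrightarrow> vnorm G (\<lambda>\<omega>. xs (nv G) \<omega> - contract G T0 \<omega>) / vnorm G (contract G T0)
              \<le> real (nv G) * \<epsilon> + K * \<epsilon>\<^sup>2))"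
proof (intro exI[of _ "3 ^ nv G"] exI[of _ 1] conjI zero_less_one allI impI, elim conjE, goal_cases)
  case (1 \<epsilon> eps xs Cs ds)
  have "vnorm G (\<lambda>\<omega>. xs (nv G) \<omega> - contract G T0 \<omega>) = vnorm G (\<lambda>\<omega>. xs (nv G) \<omega> - xs 0 \<omega>)"
    using 1 by (auto intro: vnorm_cong)
  also have "\<dots> \<le> ((1 + \<epsilon>) ^ nv G - 1) * vnorm G (xs 0)"
    using 1 by (intro vnorm_sweep_error_le[where eps = eps and ds = ds]) auto
  also have "vnorm G (xs 0) = vnorm G (contract G T0)"
    using 1 by (auto intro: vnorm_cong)
  also have "((1 + \<epsilon>) ^ nv G - 1) * \<dots> \<le> (real (nv G) * \<epsilon> + 3 ^ nv G * \<epsilon>\<^sup>2) * vnorm G (contract G T0)"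
    using one_add_power_le[of \<epsilon> "nv G"] 1 by (intro mult_right_mono vnorm_nonneg) auto
  finally show ?case
    using vnorm_pos[OF assms(2)] by (simp add: divide_le_eq)
qed

end
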